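(* Let $\Gamma$ be a single-player extensive-form game with no chance nodes. For every leaf $z\in\mathcal Z$ there exists a behavioral strategy $\pi_z$ that reaches $z$ with probability $\alpha(z)$, and hence $U_1(\pi_z)\ge\alpha(z)u_1(z)$.
   Context: A single-player extensive-form game without chance nodes consists of a finite rooted tree (nodes $\mathcal H$, leaves $\mathcal Z$, actions $A_h$), all nonterminal nodes belonging to Player 1, a utility $u_1:\mathcal Z\to\mathbb R_{\ge0}$, and a partition $\mathcal I_1$ of the nonterminal nodes into infosets with common action sets $A_I$. A behavioral strategy $\pi$ assigns $\pi(\cdot\mid I)\in\Delta(A_I)$ to each $I$; the reach probability of $z$ is the product of $\pi(a_k\mid I_k)$ along its path; $U_1(\pi)=\sum_z\mathbb P(z\mid\pi)u_1(z)$. For $z\in\mathcal Z$ with root-to-$z$ path $(h_0,\dots,h_{d-1})$, let $I_k$ be the infoset of $h_k$ and $a_k$ the action taken at $h_k$. For $I\in\mathcal I_1$ and $a\in A_I$ let $n_z(I)=|\{k:I_k=I\}|$, $n_z(a)=|\{k:I_k=I,a_k=a\}|$, $p_z(a)=n_z(a)/n_z(I)$, and define the absentmindedness coefficient $\alpha(z)=\prod_{I\in\mathcal I_1:n_z(I)>1}\prod_{a\in A_I:n_z(a)>0}p_z(a)^{n_z(a)}\in(0,1]$. *)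

theory Defs
  imports Complex_Main
begin

text \<open>Nodes are histories (lists of actions from the root).\<close>

definition actions :: "'a list set \<Rightarrow> 'a list \<Rightarrow> 'a set" where
  "actions H h = {a. h @ [a] \<in> H}"

definition leaves :: "'a list set \<Rightarrow> 'a list set" where
  "leaves H = {h \<in> H. actions H h = {}}"

definition nonterminals :: "'a list set \<Rightarrow> 'a list set" where
  "nonterminals H = H - leaves H"

definition infosets :: "'a list set \<Rightarrow> ('a list \<Rightarrow> 'i) \<Rightarrow> 'i set" where
  "infosets H infs = infs ` nonterminals H"

text \<open>Action set A_I of infoset I (well defined under the game assumption).\<close>
definition infoset_actions :: "'a list set \<Rightarrow> ('a list \<Rightarrow> 'i) \<Rightarrow> 'i \<Rightarrow> 'a set" where
  "infoset_actions H infs I = actions H (SOME h. h \<in> nonterminals H \<and> infs h = I)"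

definition efg_game :: "'a list set \<Rightarrow> ('a list \<Rightarrow> 'i) \<Rightarrow> bool" where
  "efg_game H infs \<longleftrightarrow>
     finite H \<and> [] \<in> H \<and> (\<forall>h a. h @ [a] \<in> H \<longrightarrow> h \<in> H) \<and>
     (\<forall>h\<in>nonterminals H. \<forall>h'\<in>nonterminals H. infs h = infs h' \<longrightarrow> actions H h = actions H h')"

definition behavioral_strategy :: "'a list set \<Rightarrow> ('a list \<Rightarrow> 'i) \<Rightarrow> ('i \<Rightarrow> 'a \<Rightarrow> real) \<Rightarrow> bool" where
  "behavioral_strategy H infs \<pi> \<longleftrightarrow>
     (\<forall>I\<in>infosets H infs. (\<forall>a\<in>infoset_actions H infs I. \<pi> I a \<ge> 0) \<and>
        (\<Sum>a\<in>infoset_actions H infs I. \<pi> I a) = 1)"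

definition reach_prob :: "('a list \<Rightarrow> 'i) \<Rightarrow> ('i \<Rightarrow> 'a \<Rightarrow> real) \<Rightarrow> 'a list \<Rightarrow> real" where
  "reach_prob infs \<pi> z = (\<Prod>k<length z. \<pi> (infs (take k z)) (z ! k))"

definition expected_utility ::
  "'a list set \<Rightarrow> ('a list \<Rightarrow> 'i) \<Rightarrow> ('a list \<Rightarrow> real) \<Rightarrow> ('i \<Rightarrow> 'a \<Rightarrow> real) \<Rightarrow> real" where
  "expected_utility H infs u \<pi> = (\<Sum>z\<in>leaves H. reach_prob infs \<pi> z * u z)"

definition n_infoset :: "('a list \<Rightarrow> 'i) \<Rightarrow> 'a list \<Rightarrow> 'i \<Rightarrow> nat" where
  "n_infoset infs z I = card {k. k < length z \<and> infs (take k z) = I}"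

definition n_action :: "('a list \<Rightarrow> 'i) \<Rightarrow> 'a list \<Rightarrow> 'i \<Rightarrow> 'a \<Rightarrow> nat" where
  "n_action infs z I a = card {k. k < length z \<and> infs (take k z) = I \<and> z ! k = a}"

definition absent_coeff :: "'a list set \<Rightarrow> ('a list \<Rightarrow> 'i) \<Rightarrow> 'a list \<Rightarrow> real" where
  "absent_coeff H infs z =
     (\<Prod>I\<in>{I\<in>infosets H infs. n_infoset infs z I > 1}.
        \<Prod>a\<in>{a\<in>infoset_actions H infs I. n_action infs z I a > 0}.
          (real (n_action infs z I a) / real (n_infoset infs z I)) ^ n_action infs z I a)"

end

theory Submission
  imports Defs
begin

text \<open>The strategy \<open>\<pi>\<^sub>z\<close> plays, at every infoset \<open>I\<close> met along \<open>z\<close>, each action \<open>a\<close>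
  with its empirical frequency \<open>n\<^sub>z(a)/n\<^sub>z(I)\<close> on the path.  The reach probability of \<open>z\<close>
  is a product over the positions of \<open>z\<close>; grouping the positions by infoset and then by action
  turns it into \<open>\<Prod>\<^sub>I \<Prod>\<^sub>a (n\<^sub>z(a)/n\<^sub>z(I))^n\<^sub>z(a)\<close>, which is \<open>\<alpha>(z)\<close> because the infosets met only once
  contribute the factor \<open>(1/1)^1\<close>.  The utility bound holds as all other leaves contribute
  nonnegatively.\<close>

lemma prod_eq_prod_image_power_card:
  fixes g :: "'b \<Rightarrow> 'c::comm_monoid_mult"
  assumes "finite K"
  shows "(\<Prod>k\<in>K. g (v k)) = (\<Prod>a\<in>v ` K. g a ^ card {k\<in>K. v k = a})"
proof -
  have "(\<Prod>k\<in>K. g (v k)) = (\<Prod>a\<in>v ` K. \<Prod>k\<in>{k\<in>K. v k = a}. g (v k))"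
    using assms by (intro prod.group[symmetric]) auto
  also have "\<dots> = (\<Prod>a\<in>v ` K. g a ^ card {k\<in>K. v k = a})"
    by (intro prod.cong refl) simp
  finally show ?thesis .
qed

definition visits :: "('a list \<Rightarrow> 'i) \<Rightarrow> 'a list \<Rightarrow> 'i \<Rightarrow> nat set" where
  "visits infs z I = {k. k < length z \<and> infs (take k z) = I}"

lemma finite_visits [simp]: "finite (visits infs z I)"
  by (simp add: visits_def)

lemma n_infoset_eq_card_visits: "n_infoset infs z I = card (visits infs z I)"
  by (simp add: n_infoset_def visits_def)

lemma n_action_eq_card_visits: "n_action infs z I a = card {k\<in>visits infs z I. z ! k = a}"
  unfolding n_action_def visits_def by (rule arg_cong[where f = card]) auto

lemma n_action_le_n_infoset: "n_action infs z I a \<le> n_infoset infs z I"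
  unfolding n_action_eq_card_visits n_infoset_eq_card_visits by (rule card_mono) auto

lemma n_action_pos_iff: "0 < n_action infs z I a \<longleftrightarrow> a \<in> (!) z ` visits infs z I"
  by (auto simp: n_action_eq_card_visits card_gt_0_iff)

lemma sum_n_action_eq_n_infoset:
  assumes "finite A" and "(!) z ` visits infs z I \<subseteq> A"
  shows "(\<Sum>a\<in>A. n_action infs z I a) = n_infoset infs z I"
proof -
  have "(\<Sum>a\<in>A. card {k\<in>visits infs z I. z ! k = a}) = card (visits infs z I)"
    using sum.group[of "visits infs z I" A "(!) z" "\<lambda>_. 1::nat"] assms by simp
  then show ?thesis by (simp add: n_action_eq_card_visits n_infoset_eq_card_visits)
qed

lemma reach_prob_eq_prod_visits:
  "reach_prob infs \<pi> z =
     (\<Prod>I\<in>(\<lambda>k. infs (take k z)) ` {..<length z}.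
        \<Prod>a\<in>(!) z ` visits infs z I. \<pi> I a ^ n_action infs z I a)"
proof -
  have "reach_prob infs \<pi> z =
      (\<Prod>I\<in>(\<lambda>k. infs (take k z)) ` {..<length z}. \<Prod>k\<in>visits infs z I. \<pi> I (z ! k))"
    unfolding reach_prob_def visits_def
    by (subst prod.group[symmetric, where g = "\<lambda>k. infs (take k z)"]) (auto intro!: prod.cong)
  also have "\<dots> = (\<Prod>I\<in>(\<lambda>k. infs (take k z)) ` {..<length z}.
        \<Prod>a\<in>(!) z ` visits infs z I. \<pi> I a ^ n_action infs z I a)"
    by (simp add: prod_eq_prod_image_power_card n_action_eq_card_visits)
  finally show ?thesis .
qed

lemma efg_game_prefix_closed:
  assumes "efg_game H infs" and "xs @ ys \<in> H"
  shows "xs \<in> H"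
  using assms(2)
proof (induction ys rule: rev_induct)
  case (snoc y ys)
  then show ?case using assms(1) unfolding efg_game_def by (metis append_assoc)
qed simp

lemma efg_game_path_step:
  assumes game: "efg_game H infs" and "z \<in> H" and "k < length z"
  shows "take k z \<in> nonterminals H" and "z ! k \<in> actions H (take k z)"
proof -
  have "take k z @ [z ! k] @ drop (Suc k) z \<in> H"
    using assms(2,3) by (simp add: id_take_nth_drop[symmetric])
  then have step: "take k z @ [z ! k] \<in> H"
    using efg_game_prefix_closed[OF game] by (metis append_assoc)
  then show action: "z ! k \<in> actions H (take k z)" by (simp add: actions_def)
  have "take k z \<in> H" using efg_game_prefix_closed[OF game step] .
  with action show "take k z \<in> nonterminals H" by (auto simp: nonterminals_def leaves_def)
qed

lemma infoset_actions_eq_actions: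
  assumes game: "efg_game H infs" and h: "h \<in> nonterminals H"
  shows "infoset_actions H infs (infs h) = actions H h"
proof -
  have "\<exists>h'. h' \<in> nonterminals H \<and> infs h' = infs h" using h by blast
  then have "(SOME h'. h' \<in> nonterminals H \<and> infs h' = infs h) \<in> nonterminals H \<and>
      infs (SOME h'. h' \<in> nonterminals H \<and> infs h' = infs h) = infs h"
    by (rule someI_ex)
  with game h show ?thesis unfolding infoset_actions_def efg_game_def by metis
qed

lemma finite_actions:
  assumes "finite H"
  shows "finite (actions H h)"
proof -
  have "actions H h = (\<lambda>a. h @ [a]) -` H" by (auto simp: actions_def)
  then show ?thesis using finite_vimageI[OF assms, of "\<lambda>a. h @ [a]"] by (simp add: inj_def)
qed

lemma efg_game_visited_infoset:
  assumes game: "efg_game H infs" and "z \<in> H" and "k \<in> visits infs z I"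
  shows "I \<in> infosets H infs" and "z ! k \<in> infoset_actions H infs I"
proof -
  have k: "k < length z" and I: "I = infs (take k z)" using assms(3) by (auto simp: visits_def)
  show "I \<in> infosets H infs"
    using efg_game_path_step(1)[OF game assms(2) k] I by (simp add: infosets_def)
  show "z ! k \<in> infoset_actions H infs I"
    using efg_game_path_step[OF game assms(2) k] infoset_actions_eq_actions[OF game] I by simp
qed

lemma efg_game_image_visits:
  assumes game: "efg_game H infs" and "z \<in> H"
  shows "(!) z ` visits infs z I = {a \<in> infoset_actions H infs I. 0 < n_action infs z I a}"
  using efg_game_visited_infoset(2)[OF assms] by (auto simp: n_action_pos_iff)

lemma expected_utility_ge_leaf_term:
  assumes "finite H" and "\<And>I a. 0 \<le> \<pi> I a" and "\<forall>z'\<in>leaves H. 0 \<le> u z'"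
    and "z \<in> leaves H"
  shows "reach_prob infs \<pi> z * u z \<le> expected_utility H infs u \<pi>"
proof -
  have "0 \<le> reach_prob infs \<pi> z'" for z'
    unfolding reach_prob_def by (intro prod_nonneg) (simp add: assms(2))
  moreover have "finite (leaves H)" using assms(1) by (simp add: leaves_def)
  ultimately show ?thesis
    unfolding expected_utility_def using assms(3,4) by (intro member_le_sum) auto
qed

text \<open>Infosets not met along \<open>z\<close> are played uniformly; any distribution would do there.\<close>

definition empirical_strategy :: "'a list set \<Rightarrow> ('a list \<Rightarrow> 'i) \<Rightarrow> 'a list \<Rightarrow> 'i \<Rightarrow> 'a \<Rightarrow> real" where
  "empirical_strategy H infs z I a =
     (if n_infoset infs z I = 0 then 1 / real (card (infoset_actions H infs I))
      else real (n_action infs z I a) / real (n_infoset infs z I))"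

lemma empirical_strategy_nonneg: "0 \<le> empirical_strategy H infs z I a"
  by (simp add: empirical_strategy_def)

lemma behavioral_strategy_empirical_strategy:
  assumes game: "efg_game H infs" and z: "z \<in> H"
  shows "behavioral_strategy H infs (empirical_strategy H infs z)"
  unfolding behavioral_strategy_def
proof (intro ballI conjI)
  fix I assume "I \<in> infosets H infs"
  then obtain h where h: "h \<in> nonterminals H" and I: "I = infs h"
    by (auto simp: infosets_def)
  define A where "A = infoset_actions H infs I"
  have A: "A = actions H h" unfolding A_def I using infoset_actions_eq_actions[OF game h] .
  have finite_A: "finite A"
    using finite_actions[of H h] game by (simp add: A efg_game_def)
  have "A \<noteq> {}"
    using h by (simp add: A nonterminals_def leaves_def)
  show "(\<Sum>a\<in>infoset_actions H infs I. empirical_strategy H infs z I a) = 1"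
  proof (cases "n_infoset infs z I = 0")
    case True
    with finite_A \<open>A \<noteq> {}\<close> show ?thesis
      by (simp add: empirical_strategy_def flip: A_def)
  next
    case False
    have "(\<Sum>a\<in>A. n_action infs z I a) = n_infoset infs z I"
      using efg_game_visited_infoset(2)[OF game z] finite_A
      by (intro sum_n_action_eq_n_infoset) (auto simp: A_def)
    then have "(\<Sum>a\<in>A. real (n_action infs z I a)) = real (n_infoset infs z I)"
      unfolding of_nat_sum[symmetric] by (rule arg_cong)
    with False show ?thesis
      by (simp add: empirical_strategy_def sum_divide_distrib[symmetric] flip: A_def)
  qed
qed (rule empirical_strategy_nonneg)

definition absent_factor :: "'a list set \<Rightarrow> ('a list \<Rightarrow> 'i) \<Rightarrow> 'a list \<Rightarrow> 'i \<Rightarrow> real" where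
  "absent_factor H infs z I =
     (\<Prod>a\<in>{a\<in>infoset_actions H infs I. 0 < n_action infs z I a}.
        (real (n_action infs z I a) / real (n_infoset infs z I)) ^ n_action infs z I a)"

lemma absent_coeff_eq_prod_absent_factor:
  "absent_coeff H infs z = (\<Prod>I\<in>{I\<in>infosets H infs. 1 < n_infoset infs z I}. absent_factor H infs z I)"
  by (simp add: absent_coeff_def absent_factor_def)

lemma absent_factor_visited_once:
  assumes "n_infoset infs z I = 1"
  shows "absent_factor H infs z I = 1"
  unfolding absent_factor_def
proof (intro prod.neutral ballI)
  fix a assume "a \<in> {a \<in> infoset_actions H infs I. 0 < n_action infs z I a}"
  with n_action_le_n_infoset[of infs z I a] assms have "n_action infs z I a = 1" by simp
  with assms show "(real (n_action infs z I a) / real (n_infoset infs z I)) ^ n_action infs z I a = 1"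
    by simp
qed

lemma reach_prob_empirical_strategy:
  assumes game: "efg_game H infs" and z: "z \<in> H"
  shows "reach_prob infs (empirical_strategy H infs z) z = absent_coeff H infs z"
proof -
  define V where "V = (\<lambda>k. infs (take k z)) ` {..<length z}"
  have visited: "I \<in> V \<longleftrightarrow> n_infoset infs z I \<noteq> 0" for I
    by (auto simp: n_infoset_eq_card_visits card_gt_0_iff visits_def V_def)
  have "reach_prob infs (empirical_strategy H infs z) z = (\<Prod>I\<in>V. absent_factor H infs z I)"
    unfolding reach_prob_eq_prod_visits efg_game_image_visits[OF game z] V_def[symmetric]
    by (intro prod.cong refl) (simp add: absent_factor_def empirical_strategy_def visited)
  also have "\<dots> = (\<Prod>I\<in>{I \<in> infosets H infs. 1 < n_infoset infs z I}. absent_factor H infs z I)"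
  proof (rule prod.mono_neutral_right)
    show "{I \<in> infosets H infs. 1 < n_infoset infs z I} \<subseteq> V"
      by (auto simp: visited)
    show "\<forall>I\<in>V - {I \<in> infosets H infs. 1 < n_infoset infs z I}. absent_factor H infs z I = 1"
    proof
      fix I assume I: "I \<in> V - {I \<in> infosets H infs. 1 < n_infoset infs z I}"
      then obtain k where "k \<in> visits infs z I" by (auto simp: V_def visits_def)
      then have "I \<in> infosets H infs" by (rule efg_game_visited_infoset(1)[OF game z])
      with I have "n_infoset infs z I = 1" by (auto simp: visited)
      then show "absent_factor H infs z I = 1" by (rule absent_factor_visited_once)
    qed
  qed (simp add: V_def)
  also have "\<dots> = absent_coeff H infs z"
    by (rule absent_coeff_eq_prod_absent_factor[symmetric])
  finally show ?thesis .
qed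

theorem lemma2:
  fixes H :: "'a list set" and infs :: "'a list \<Rightarrow> 'i" and u :: "'a list \<Rightarrow> real"
    and z :: "'a list"
  assumes game: "efg_game H infs"
    and u_nonneg: "\<forall>z'\<in>leaves H. u z' \<ge> 0"
    and leaf: "z \<in> leaves H"
  shows "\<exists>\<pi>. behavioral_strategy H infs \<pi> \<and>
             reach_prob infs \<pi> z = absent_coeff H infs z \<and>
             expected_utility H infs u \<pi> \<ge> absent_coeff H infs z * u z"
proof (intro exI conjI)
  have z: "z \<in> H" using leaf by (simp add: leaves_def)
  show "behavioral_strategy H infs (empirical_strategy H infs z)"
    using behavioral_strategy_empirical_strategy[OF game z] .
  show reach: "reach_prob infs (empirical_strategy H infs z) z = absent_coeff H infs z"
    using reach_prob_empirical_strategy[OF game z] .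
  have "finite H" using game by (simp add: efg_game_def)
  from expected_utility_ge_leaf_term[where infs = infs and \<pi> = "empirical_strategy H infs z",
      OF this empirical_strategy_nonneg u_nonneg leaf]
  show "absent_coeff H infs z * u z \<le> expected_utility H infs u (empirical_strategy H infs z)"
    unfolding reach .
qed

end
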